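(* Let $\xi\in(0,1)$ be a constant. For unit-sum valuation functions in one-sided matching with $n$ agents and $n$ items, every deterministic matching algorithm that makes at most $k$ value queries per agent, where $1\le k\le(1-\xi)n^{1/(k+1)}$, has distortion $\Omega\!\left(\frac1k n^{1/(k+1)}\right)$. The hidden constant depends only on $\xi$. This holds even on instances where all agents have the same ranking of the items.
   Context: One-sided matching: there is a set $N$ of $n$ agents and a set $A$ of $n$ items. Each agent $i$ has a valuation function $v_i:A\to\mathbb{R}_{\ge0}$ with $\sum_{j\in A}v_i(j)=1$ (unit-sum). A deterministic matching algorithm making $k$ queries per agent receives the strict rankings consistent with the values (if $a\succ_i b$ then $v_i(a)\ge v_i(b)$). It adaptively makes value queries $(i,j)\mapsto v_i(j)$, at most $k$ per agent, and outputs a bijection $Y:N\to A$. Its distortion is the supremum over unit-sum valuation profiles of $\max_Z\sum_i v_i(z_i)/\sum_i v_i(y_i)$. *)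

theory Defs
  imports Complex_Main
begin

text \<open>Agents and items are both indexed by {..<n}. A valuation profile is
  v :: nat => nat => real, with v i j the value of agent i for item j.
  A ranking profile is P :: nat => nat => nat, where P i r is the item that
  agent i ranks at position r (position 0 = most preferred).\<close>

text \<open>A deterministic adaptive query algorithm, after seeing the rankings,
  is a (possibly infinitely branching, well-founded) decision tree: either it
  outputs a matching, or it queries the value v i j and continues depending
  on the answer.\<close>

datatype qtree = Output "nat \<Rightarrow> nat" | Query nat nat "real \<Rightarrow> qtree"

primrec run_out :: "qtree \<Rightarrow> (nat \<Rightarrow> nat \<Rightarrow> real) \<Rightarrow> nat \<Rightarrow> nat" where
  "run_out (Output Y) v = Y"
| "run_out (Query i j f) v = run_out (f (v i j)) v"

primrec run_queries :: "qtree \<Rightarrow> (nat \<Rightarrow> nat \<Rightarrow> real) \<Rightarrow> (nat \<times> nat) list" where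
  "run_queries (Output Y) v = []"
| "run_queries (Query i j f) v = (i, j) # run_queries (f (v i j)) v"

definition is_ranking :: "nat \<Rightarrow> (nat \<Rightarrow> nat) \<Rightarrow> bool" where
  "is_ranking n \<sigma> \<longleftrightarrow> bij_betw \<sigma> {..<n} {..<n}"

definition unit_sum :: "nat \<Rightarrow> (nat \<Rightarrow> nat \<Rightarrow> real) \<Rightarrow> bool" where
  "unit_sum n v \<longleftrightarrow> (\<forall>i<n. (\<forall>j<n. v i j \<ge> 0) \<and> (\<Sum>j<n. v i j) = 1)"

definition consistent :: "nat \<Rightarrow> (nat \<Rightarrow> nat \<Rightarrow> nat) \<Rightarrow> (nat \<Rightarrow> nat \<Rightarrow> real) \<Rightarrow> bool" where
  "consistent n P v \<longleftrightarrow> (\<forall>i<n. \<forall>r s. r < s \<and> s < n \<longrightarrow> v i (P i r) \<ge> v i (P i s))"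

definition valid_alg :: "nat \<Rightarrow> nat \<Rightarrow> ((nat \<Rightarrow> nat \<Rightarrow> nat) \<Rightarrow> qtree) \<Rightarrow> bool" where
  "valid_alg n k A \<longleftrightarrow>
    (\<forall>P v. (\<forall>i<n. is_ranking n (P i)) \<and> unit_sum n v \<and> consistent n P v \<longrightarrow>
       (\<forall>(i, j) \<in> set (run_queries (A P) v). i < n \<and> j < n) \<and>
       (\<forall>i<n. length (filter (\<lambda>q. fst q = i) (run_queries (A P) v)) \<le> k) \<and>
       bij_betw (run_out (A P) v) {..<n} {..<n})"

definition welfare :: "nat \<Rightarrow> (nat \<Rightarrow> nat \<Rightarrow> real) \<Rightarrow> (nat \<Rightarrow> nat) \<Rightarrow> real" where
  "welfare n v Y = (\<Sum>i<n. v i (Y i))"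

end

theory Submission
  imports Defs
begin

text \<open>Let m \<approx> n^(1/(k+1)) and split the items, in their common ranking order, into
  buckets 0, ..., k+1 of sizes 1, m - 1, m^2 - m, ..., m^k - m^(k-1) and the rest. Every item of
  bucket t \<le> k has base value m^-(t+1), so the base values sum to at most (k+1)/m; an agent of
  type t instead spreads all remaining mass uniformly over bucket t. The adversary answers every
  query with the base value. An agent is queried at most k times, so together with its assigned
  item it touches at most k+1 buckets and can be given a type whose bucket it never touched.
  The algorithm then behaves as on the base values and achieves welfare at most (k+1)/m, while
  some type t is shared by at least as many agents as bucket t has items, and matching these
  agents to bucket t achieves welfare close to 1.\<close>

section \<open>Decision trees\<close>

definition query_count :: "nat \<Rightarrow> (nat \<times> nat) list \<Rightarrow> nat" where
  "query_count i qs = length (filter (\<lambda>q. fst q = i) qs)"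

definition queried_items :: "nat \<Rightarrow> (nat \<times> nat) list \<Rightarrow> nat set" where
  "queried_items i qs = {j. (i, j) \<in> set qs}"

lemma finite_queried_items: "finite (queried_items i qs)"
proof -
  have "queried_items i qs \<subseteq> snd ` set qs" by (force simp: queried_items_def)
  thus ?thesis by (rule finite_subset) simp
qed

lemma card_queried_items_le: "card (queried_items i qs) \<le> query_count i qs"
proof -
  have "queried_items i qs = snd ` set (filter (\<lambda>q. fst q = i) qs)"
    by (force simp: queried_items_def)
  also have "card \<dots> \<le> card (set (filter (\<lambda>q. fst q = i) qs))" by (rule card_image_le) simp
  also have "\<dots> \<le> query_count i qs" unfolding query_count_def by (rule card_length)
  finally show ?thesis .
qed

lemma query_count_take_le: "query_count i (take p qs) \<le> query_count i qs"
  unfolding query_count_def by (metis append_take_drop_id filter_append length_append le_add1)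

lemma take_run_queries_cong:
  "\<forall>(i, j) \<in> set (take p (run_queries T v)). w i j = v i j
   \<Longrightarrow> take p (run_queries T w) = take p (run_queries T v)"
proof (induction T arbitrary: p)
  case (Query i j f)
  thus ?case by (cases p) auto
qed simp

lemma run_out_cong:
  "\<forall>(i, j) \<in> set (run_queries T v). w i j = v i j \<Longrightarrow> run_out T w = run_out T v"
  by (induction T) auto

text \<open>By induction on prefixes: a prefix of the run on v is also a prefix of the run on any w
  that agrees with v on it, and that run has at most k queries per agent.\<close>

lemma query_count_le_by_adversary:
  assumes adversary: "\<And>L. \<forall>i. query_count i L \<le> Suc k \<Longrightarrow>
    \<exists>w. (\<forall>(i, j) \<in> set L. w i j = v i j) \<and> (\<forall>i. query_count i (run_queries T w) \<le> k)"
  shows "query_count i (run_queries T v) \<le> k"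
proof -
  define Q where "Q = run_queries T v"
  have "p \<le> length Q \<Longrightarrow> \<forall>i. query_count i (take p Q) \<le> k" for p
  proof (induction p)
    case 0
    show ?case by (simp add: query_count_def)
  next
    case (Suc p)
    define L where "L = take (Suc p) Q"
    have "L = take p Q @ [Q ! p]" unfolding L_def using Suc.prems by (simp add: take_Suc_conv_app_nth)
    hence "query_count i L \<le> query_count i (take p Q) + 1" for i by (simp add: query_count_def)
    hence "\<forall>i. query_count i L \<le> Suc k" using Suc by simp (meson Suc_le_mono le_trans)
    then obtain w where agree: "\<forall>(i, j) \<in> set L. w i j = v i j"
      and bound: "\<forall>i. query_count i (run_queries T w) \<le> k"
      using adversary by blast
    have "take (Suc p) (run_queries T w) = L"
      using take_run_queries_cong[of "Suc p" T v w] agree by (simp add: L_def Q_def)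
    thus ?case using bound query_count_take_le by (metis L_def le_trans)
  qed
  thus ?thesis using Q_def by fastforce
qed

lemma valid_alg_run:
  assumes "valid_alg n k A" "\<forall>i<n. is_ranking n (P i)" "unit_sum n v" "consistent n P v"
  shows "bij_betw (run_out (A P) v) {..<n} {..<n}"
    and "query_count i (run_queries (A P) v) \<le> k"
proof -
  have queries: "\<forall>(i, j) \<in> set (run_queries (A P) v). i < n \<and> j < n"
    and count: "\<forall>i<n. query_count i (run_queries (A P) v) \<le> k"
    and "bij_betw (run_out (A P) v) {..<n} {..<n}"
    using assms unfolding valid_alg_def query_count_def by blast+
  thus "bij_betw (run_out (A P) v) {..<n} {..<n}" by simp
  show "query_count i (run_queries (A P) v) \<le> k"
  proof (cases "i < n")
    case False
    hence "filter (\<lambda>q. fst q = i) (run_queries (A P) v) = []"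
      using queries by (force simp: filter_empty_conv)
    thus ?thesis by (simp add: query_count_def)
  qed (use count in simp)
qed

lemma welfare_nonneg:
  assumes "unit_sum n v" "bij_betw Y {..<n} {..<n}"
  shows "0 \<le> welfare n v Y"
  unfolding welfare_def
proof (rule sum_nonneg)
  fix i assume "i \<in> {..<n}"
  moreover from this have "Y i < n" using assms(2) by (meson bij_betwE lessThan_iff)
  ultimately show "0 \<le> v i (Y i)" using assms(1) by (simp add: unit_sum_def)
qed

lemma exists_bij_betw_mapping_into:
  assumes "finite S" "A \<subseteq> S" "B \<subseteq> S" "card A = card B"
  shows "\<exists>Z. bij_betw Z S S \<and> (\<forall>x\<in>A. Z x \<in> B)"
proof -
  have fin: "finite A" "finite B" using assms finite_subset by auto
  obtain h where h: "bij_betw h A B" using finite_same_card_bij[OF fin assms(4)] by blast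
  have "card (S - A) = card (S - B)" using assms fin by (simp add: card_Diff_subset)
  then obtain h' where h': "bij_betw h' (S - A) (S - B)"
    using finite_same_card_bij assms(1) by (metis finite_Diff)
  define Z where "Z x = (if x \<in> A then h x else h' x)" for x
  have "bij_betw Z (A \<union> (S - A)) (B \<union> (S - B))"
    unfolding Z_def by (rule bij_betw_disjoint_Un[OF h h']) auto
  moreover have "A \<union> (S - A) = S" "B \<union> (S - B) = S" using assms by auto
  moreover have "\<forall>x\<in>A. Z x \<in> B" using h by (simp add: Z_def bij_betwE)
  ultimately show ?thesis by auto
qed

lemma exists_fibre_card_le:
  assumes "finite S" "finite K" "K \<noteq> {}" "f ` S \<subseteq> K" "g ` S \<subseteq> K"
  shows "\<exists>t\<in>K. card {x \<in> S. g x = t} \<le> card {x \<in> S. f x = t}"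
proof (rule ccontr)
  have fibres: "(\<Sum>t\<in>K. card {x \<in> S. h x = t}) = card S" if "h ` S \<subseteq> K" for h
    using sum.group[OF assms(1,2) that, of "\<lambda>_. 1::nat"] by simp
  assume "\<not> ?thesis"
  hence "(\<Sum>t\<in>K. card {x \<in> S. f x = t}) < (\<Sum>t\<in>K. card {x \<in> S. g x = t})"
    using assms(2,3) by (intro sum_strict_mono) auto
  thus False using fibres assms(4,5) by simp
qed

section \<open>The hard instance\<close>

locale hard_instance =
  fixes m k n :: nat
  assumes m_ge_2: "2 \<le> m" and k_less_m: "k + 1 \<le> m" and power_le_n: "m ^ (k + 1) \<le> n"
begin

text \<open>Bucket 0 is {0}, bucket t \<in> {1..k} is {m^(t-1)..<m^t}, and bucket k+1 holds the rest.\<close>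

definition bucket :: "nat \<Rightarrow> nat" where
  "bucket j = min (k + 1) (LEAST t. j < m ^ t)"

definition level_value :: "nat \<Rightarrow> real" where
  "level_value t = (if t \<le> k then 1 / real m ^ (t + 1) else 0)"

definition base_value :: "nat \<Rightarrow> real" where
  "base_value j = level_value (bucket j)"

definition bucket_items :: "nat \<Rightarrow> nat set" where
  "bucket_items t = {j. j < n \<and> bucket j = t}"

definition base_welfare :: real where
  "base_welfare = (\<Sum>j<n. base_value j)"

definition outside_mass :: "nat \<Rightarrow> real" where
  "outside_mass t = sum base_value {j. j < n \<and> bucket j \<noteq> t}"

definition boosted_value :: "nat \<Rightarrow> real" where
  "boosted_value t = (1 - outside_mass t) / real (card (bucket_items t))"

definition typed_value :: "nat \<Rightarrow> nat \<Rightarrow> real" where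
  "typed_value t j = (if j < n \<and> bucket j = t then boosted_value t else base_value j)"

text \<open>T i is the type of agent i, a bucket index in {..k+1}.\<close>

definition profile :: "(nat \<Rightarrow> nat) \<Rightarrow> nat \<Rightarrow> nat \<Rightarrow> real" where
  "profile T i j = (if i < n then typed_value (T i) j else base_value j)"

lemma less_power_Least: "j < m ^ (LEAST t. j < m ^ t)"
proof (rule LeastI)
  have "j < 2 ^ j" by (rule less_exp)
  also have "(2::nat) ^ j \<le> m ^ j" using m_ge_2 by (rule power_mono) simp
  finally show "j < m ^ j" .
qed

lemma bucket_le: "bucket j \<le> k + 1"
  by (simp add: bucket_def)

lemma bucket_0: "bucket 0 = 0"
  by (simp add: bucket_def)

lemma bucket_mono: "j1 \<le> j2 \<Longrightarrow> bucket j1 \<le> bucket j2"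
  unfolding bucket_def using less_power_Least[of j2]
  by (metis (no_types, lifting) Least_le le_less_trans min.mono order_refl)

lemma less_power_bucket: "bucket j = t \<Longrightarrow> t \<le> k \<Longrightarrow> j < m ^ t"
  using less_power_Least[of j] by (auto simp: bucket_def min_def split: if_splits)

lemma bucket_eqI:
  assumes "1 \<le> t" "t \<le> k + 1" "m ^ (t - 1) \<le> j" "j < m ^ t"
  shows "bucket j = t"
proof -
  have "(LEAST s. j < m ^ s) = t"
  proof (rule Least_equality)
    fix s assume "j < m ^ s"
    moreover have "s \<le> t - 1 \<Longrightarrow> m ^ s \<le> m ^ (t - 1)" using m_ge_2 by (simp add: power_increasing)
    ultimately show "t \<le> s" using assms(3) by linarith
  qed fact
  thus ?thesis using assms(2) by (simp add: bucket_def)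
qed

lemma n_pos: "0 < n"
proof -
  have "0 < m ^ (k + 1)" using m_ge_2 by simp
  thus ?thesis using power_le_n by linarith
qed

lemma finite_bucket_items: "finite (bucket_items t)"
  by (simp add: bucket_items_def)

lemma card_bucket_items_le: "t \<le> k \<Longrightarrow> card (bucket_items t) \<le> m ^ t"
  using card_mono[of "{..<m ^ t}" "bucket_items t"] less_power_bucket
  by (force simp: bucket_items_def)

lemma card_bucket_items_ge:
  assumes "1 \<le> t" "t \<le> k + 1"
  shows "real m ^ t - real m ^ (t - 1) \<le> card (bucket_items t)"
proof -
  have "m ^ t \<le> m ^ (k + 1)" using assms(2) by (rule power_increasing) (use m_ge_2 in simp)
  hence "{m ^ (t - 1)..<m ^ t} \<subseteq> bucket_items t"
    using bucket_eqI assms power_le_n by (auto simp: bucket_items_def)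
  hence "card {m ^ (t - 1)..<m ^ t} \<le> card (bucket_items t)"
    by (rule card_mono[OF finite_bucket_items])
  moreover have "m ^ (t - 1) \<le> m ^ t" using m_ge_2 by (simp add: power_increasing)
  ultimately have "m ^ t - m ^ (t - 1) \<le> card (bucket_items t)" by simp
  hence "real (m ^ t - m ^ (t - 1)) \<le> real (card (bucket_items t))" by (rule of_nat_mono)
  thus ?thesis using \<open>m ^ (t - 1) \<le> m ^ t\<close> by (simp only: of_nat_diff of_nat_power)
qed

lemma card_bucket_items_pos:
  assumes "t \<le> k + 1"
  shows "0 < card (bucket_items t)"
proof (cases "t = 0")
  case True
  hence "0 \<in> bucket_items t" using n_pos bucket_0 by (simp add: bucket_items_def)
  thus ?thesis using finite_bucket_items card_gt_0_iff by blast
next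
  case False
  have "real m ^ (t - 1) < real m ^ t" using m_ge_2 False by (intro power_strict_increasing) auto
  thus ?thesis using card_bucket_items_ge[of t] False assms by linarith
qed

lemma level_value_nonneg: "0 \<le> level_value t"
  by (simp add: level_value_def)

lemma level_value_antimono:
  assumes "s \<le> t"
  shows "level_value t \<le> level_value s"
proof (cases "t \<le> k")
  case True
  have "real m ^ (s + 1) \<le> real m ^ (t + 1)" using m_ge_2 assms by (intro power_increasing) auto
  moreover have "0 < real m ^ (s + 1)" using m_ge_2 by simp
  ultimately show ?thesis using True assms by (simp add: level_value_def frac_le)
qed (simp add: level_value_def level_value_nonneg)

lemma base_value_nonneg: "0 \<le> base_value j"
  by (simp add: base_value_def level_value_nonneg)

lemma base_value_antimono: "j1 \<le> j2 \<Longrightarrow> base_value j2 \<le> base_value j1"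
  unfolding base_value_def by (intro level_value_antimono bucket_mono)

lemma sum_base_value_bucket_items: "sum base_value (bucket_items t) = card (bucket_items t) * level_value t"
  by (simp add: base_value_def bucket_items_def)

lemma outside_mass_plus_bucket: "outside_mass t + sum base_value (bucket_items t) = base_welfare"
proof -
  have "{..<n} = {j. j < n \<and> bucket j \<noteq> t} \<union> bucket_items t"
    and "{j. j < n \<and> bucket j \<noteq> t} \<inter> bucket_items t = {}"
    by (auto simp: bucket_items_def)
  thus ?thesis unfolding base_welfare_def outside_mass_def
    by (simp add: sum.union_disjoint finite_bucket_items)
qed

lemma outside_mass_le_base_welfare: "outside_mass t \<le> base_welfare"
proof -
  have "0 \<le> sum base_value (bucket_items t)" by (simp add: sum_nonneg base_value_nonneg)
  thus ?thesis using outside_mass_plus_bucket[of t] by linarith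
qed

text \<open>Bucket t \<le> k has at most m^t items of value m^-(t+1) each.\<close>

lemma base_welfare_le: "base_welfare \<le> real (k + 1) / m"
proof -
  have "base_welfare = (\<Sum>t\<le>k+1. sum base_value {j \<in> {..<n}. bucket j = t})"
    unfolding base_welfare_def by (rule sum.group[symmetric]) (use bucket_le in auto)
  also have "\<dots> = (\<Sum>t\<le>k+1. sum base_value (bucket_items t))"
    by (simp add: bucket_items_def)
  also have "\<dots> = (\<Sum>t\<le>k. sum base_value (bucket_items t))"
    by (simp add: sum_base_value_bucket_items level_value_def)
  also have "\<dots> \<le> (\<Sum>t\<le>k. 1 / real m)"
  proof (rule sum_mono)
    fix t assume "t \<in> {..k}"
    hence t: "t \<le> k" by simp
    have "sum base_value (bucket_items t) = card (bucket_items t) / real m ^ (t + 1)"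
      using t by (simp add: sum_base_value_bucket_items level_value_def)
    also have "\<dots> \<le> real m ^ t / real m ^ (t + 1)"
      using card_bucket_items_le[OF t] by (intro divide_right_mono) (metis of_nat_le_iff of_nat_power, simp)
    also have "\<dots> = 1 / real m" using m_ge_2 by (simp add: field_simps)
    finally show "sum base_value (bucket_items t) \<le> 1 / real m" .
  qed
  finally show ?thesis by simp
qed

lemma base_welfare_le_1: "base_welfare \<le> 1"
proof -
  have "real (k + 1) / m \<le> 1" using k_less_m m_ge_2 by (simp add: divide_le_eq_1)
  thus ?thesis using base_welfare_le by linarith
qed

lemma level_value_le_boosted_value:
  assumes "t \<le> k + 1"
  shows "level_value t \<le> boosted_value t"
proof -
  have "card (bucket_items t) * level_value t \<le> 1 - outside_mass t"
    using outside_mass_plus_bucket[of t] base_welfare_le_1 sum_base_value_bucket_items[of t] by linarith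
  thus ?thesis using card_bucket_items_pos[OF assms] by (simp add: boosted_value_def field_simps)
qed

text \<open>The mass outside bucket t \<ge> 1 includes the item of bucket 0, worth 1/m.\<close>

lemma boosted_value_le_level_value:
  assumes "1 \<le> t" "t \<le> k + 1"
  shows "boosted_value t \<le> level_value (t - 1)"
proof -
  have "base_value 0 \<le> outside_mass t"
    unfolding outside_mass_def using assms(1) n_pos bucket_0
    by (intro member_le_sum base_value_nonneg) (auto simp: bucket_items_def)
  hence "1 - outside_mass t \<le> 1 - 1 / real m" by (simp add: base_value_def bucket_0 level_value_def)
  also have "\<dots> = (real m ^ t - real m ^ (t - 1)) / real m ^ t"
    using m_ge_2 assms(1) by (cases t) (auto simp: field_simps)
  also have "\<dots> \<le> card (bucket_items t) / real m ^ t"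
    using card_bucket_items_ge[OF assms] by (simp add: divide_right_mono)
  finally have "boosted_value t \<le> 1 / real m ^ t"
    using card_bucket_items_pos[OF assms(2)] m_ge_2
    by (simp add: boosted_value_def field_simps)
  moreover have "t - 1 \<le> k" using assms(2) by simp
  ultimately show ?thesis using assms(1) by (simp add: level_value_def)
qed

lemma typed_value_nonneg: "t \<le> k + 1 \<Longrightarrow> 0 \<le> typed_value t j"
  by (simp add: typed_value_def base_value_nonneg
      order_trans[OF level_value_nonneg level_value_le_boosted_value])

lemma sum_typed_value:
  assumes "t \<le> k + 1"
  shows "(\<Sum>j<n. typed_value t j) = 1"
proof -
  have "(\<Sum>j<n. typed_value t j)
      = (\<Sum>j\<in>{..<n} \<inter> {j. j < n \<and> bucket j = t}. boosted_value t)
        + sum base_value ({..<n} \<inter> - {j. j < n \<and> bucket j = t})"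
    unfolding typed_value_def by (rule sum.If_cases) simp
  also have "{..<n} \<inter> {j. j < n \<and> bucket j = t} = bucket_items t"
    by (auto simp: bucket_items_def)
  also have "{..<n} \<inter> - {j. j < n \<and> bucket j = t} = {j. j < n \<and> bucket j \<noteq> t}"
    by auto
  finally have "(\<Sum>j<n. typed_value t j) = card (bucket_items t) * boosted_value t + outside_mass t"
    by (simp add: outside_mass_def)
  also have "card (bucket_items t) * boosted_value t = 1 - outside_mass t"
    using card_bucket_items_pos[OF assms] by (simp add: boosted_value_def)
  finally show ?thesis by simp
qed

lemma typed_value_antimono:
  assumes "t \<le> k + 1" "j1 < j2" "j2 < n"
  shows "typed_value t j2 \<le> typed_value t j1"
proof -
  have mono: "bucket j1 \<le> bucket j2" and base: "base_value j2 \<le> base_value j1"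
    using assms by (simp_all add: bucket_mono base_value_antimono)
  consider "bucket j1 = t" "bucket j2 = t" | "bucket j1 \<noteq> t" "bucket j2 \<noteq> t"
    | "bucket j1 = t" "bucket j2 \<noteq> t" | "bucket j1 \<noteq> t" "bucket j2 = t" by blast
  thus ?thesis
  proof cases
    case 3
    thus ?thesis using level_value_le_boosted_value[OF assms(1)] assms base
      by (simp add: typed_value_def base_value_def)
  next
    case 4
    hence "1 \<le> t" "bucket j1 \<le> t - 1" using mono by auto
    thus ?thesis using 4 assms boosted_value_le_level_value level_value_antimono
      by (fastforce simp: typed_value_def base_value_def)
  qed (use assms base in \<open>simp_all add: typed_value_def\<close>)
qed

lemma profile_nonneg: "\<forall>i. T i \<le> k + 1 \<Longrightarrow> 0 \<le> profile T i j"
  by (simp add: profile_def typed_value_nonneg base_value_nonneg)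

lemma unit_sum_profile: "\<forall>i. T i \<le> k + 1 \<Longrightarrow> unit_sum n (profile T)"
  by (simp add: unit_sum_def profile_def typed_value_nonneg sum_typed_value)

lemma consistent_profile: "\<forall>i. T i \<le> k + 1 \<Longrightarrow> consistent n (\<lambda>_. id) (profile T)"
  by (simp add: consistent_def profile_def typed_value_antimono)

lemma profile_eq_base_value: "bucket j \<noteq> T i \<Longrightarrow> profile T i j = base_value j"
  by (simp add: profile_def typed_value_def)

subsection \<open>The adversary\<close>

lemma exists_types_avoiding:
  assumes "\<And>i. finite (S i)" "\<And>i. card (S i) \<le> k + 1"
  shows "\<exists>T. \<forall>i. T i \<le> k + 1 \<and> (\<forall>j\<in>S i. bucket j \<noteq> T i)"
proof -
  have "\<exists>t\<le>k+1. \<forall>j\<in>S i. bucket j \<noteq> t" for i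
  proof (rule ccontr)
    assume "\<not> ?thesis"
    hence "{..k+1} \<subseteq> bucket ` S i" by auto
    hence "card {..k+1} \<le> card (S i)"
      using card_mono card_image_le assms(1) by (metis finite_imageI le_trans)
    thus False using assms(2)[of i] by simp
  qed
  thus ?thesis by metis
qed

abbreviation base_profile :: "nat \<Rightarrow> nat \<Rightarrow> real" where
  "base_profile \<equiv> \<lambda>_. base_value"

text \<open>The base profile is not unit-sum, so validity of the algorithm says nothing about it
  directly; its query bound is inherited from the profiles that answer alike.\<close>

lemma query_count_base_profile:
  assumes "valid_alg n k A"
  shows "query_count i (run_queries (A (\<lambda>_. id)) base_profile) \<le> k"
proof (rule query_count_le_by_adversary)
  fix L assume "\<forall>i. query_count i L \<le> Suc k"
  then obtain T where T: "\<forall>i. T i \<le> k + 1 \<and> (\<forall>j\<in>queried_items i L. bucket j \<noteq> T i)"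
    using exists_types_avoiding[of "\<lambda>i. queried_items i L"] finite_queried_items
      card_queried_items_le by (metis Suc_eq_plus1 le_trans)
  have "\<forall>(i, j) \<in> set L. profile T i j = base_value j"
    using T profile_eq_base_value by (auto simp: queried_items_def)
  moreover have "\<forall>i. query_count i (run_queries (A (\<lambda>_. id)) (profile T)) \<le> k"
    using valid_alg_run(2)[OF assms] T unit_sum_profile consistent_profile
    by (simp add: is_ranking_def)
  ultimately show "\<exists>w. (\<forall>(i, j) \<in> set L. w i j = base_value j) \<and>
      (\<forall>i. query_count i (run_queries (A (\<lambda>_. id)) w) \<le> k)" by blast
qed

lemma exists_fooling_profile:
  assumes "valid_alg n k A"
  shows "\<exists>T. (\<forall>i. T i \<le> k + 1) \<and>
    welfare n (profile T) (run_out (A (\<lambda>_. id)) (profile T)) = base_welfare"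
proof -
  define Q where "Q = run_queries (A (\<lambda>_. id)) base_profile"
  define Y where "Y = run_out (A (\<lambda>_. id)) base_profile"
  have "card (insert (Y i) (queried_items i Q)) \<le> k + 1" for i
  proof -
    have "card (insert (Y i) (queried_items i Q)) \<le> card (queried_items i Q) + 1"
      by (simp add: card_insert_if finite_queried_items)
    also have "\<dots> \<le> k + 1"
      using card_queried_items_le query_count_base_profile[OF assms] Q_def by (metis add_le_mono1 le_trans)
    finally show ?thesis .
  qed
  then obtain T where T: "\<forall>i. T i \<le> k + 1 \<and> (\<forall>j\<in>insert (Y i) (queried_items i Q). bucket j \<noteq> T i)"
    using exists_types_avoiding[of "\<lambda>i. insert (Y i) (queried_items i Q)"] finite_queried_items
    by blast
  hence bounded: "\<forall>i. T i \<le> k + 1" by blast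
  have "\<forall>(i, j) \<in> set Q. profile T i j = base_value j"
    using T profile_eq_base_value by (auto simp: queried_items_def)
  hence same_output: "run_out (A (\<lambda>_. id)) (profile T) = Y"
    using run_out_cong Q_def Y_def by blast
  hence bij: "bij_betw Y {..<n} {..<n}"
    using valid_alg_run(1)[OF assms _ unit_sum_profile[OF bounded] consistent_profile[OF bounded]]
    by (simp add: is_ranking_def)
  have "welfare n (profile T) Y = (\<Sum>i<n. base_value (Y i))"
    unfolding welfare_def using T by (intro sum.cong) (simp_all add: profile_eq_base_value)
  also have "\<dots> = base_welfare" unfolding base_welfare_def by (rule sum.reindex_bij_betw[OF bij])
  finally show ?thesis using same_output bounded by auto
qed

text \<open>Some type t is held by at least as many agents as bucket t has items; matching those
  agents into bucket t collects all mass 1 - outside_mass t.\<close>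

lemma exists_matching_welfare_ge:
  assumes "\<forall>i. T i \<le> k + 1"
  shows "\<exists>Z. bij_betw Z {..<n} {..<n} \<and> 1 - base_welfare \<le> welfare n (profile T) Z"
proof -
  obtain t where t: "t \<le> k + 1"
    and card_le: "card (bucket_items t) \<le> card {i \<in> {..<n}. T i = t}"
    using exists_fibre_card_le[of "{..<n}" "{..k+1}" T bucket] assms bucket_le
    by (auto simp: bucket_items_def)
  obtain agents where agents: "agents \<subseteq> {i \<in> {..<n}. T i = t}"
    "card agents = card (bucket_items t)"
    using obtain_subset_with_card_n[OF card_le] by metis
  obtain Z where Z: "bij_betw Z {..<n} {..<n}" "\<forall>i\<in>agents. Z i \<in> bucket_items t"
    using exists_bij_betw_mapping_into[of "{..<n}" agents "bucket_items t"] agents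
    by (auto simp: bucket_items_def)
  have "1 - base_welfare \<le> 1 - outside_mass t"
    using outside_mass_le_base_welfare by simp
  also have "\<dots> = (\<Sum>i\<in>agents. boosted_value t)"
    using agents(2) card_bucket_items_pos[OF t] by (simp add: boosted_value_def)
  also have "\<dots> = (\<Sum>i\<in>agents. profile T i (Z i))"
    using Z(2) agents(1) by (intro sum.cong) (auto simp: profile_def typed_value_def bucket_items_def)
  also have "\<dots> \<le> welfare n (profile T) Z"
    unfolding welfare_def using agents(1) assms
    by (intro sum_mono2) (auto simp: profile_nonneg)
  finally show ?thesis using Z(1) by blast
qed

theorem adversary_ratio:
  assumes "valid_alg n k A" "2 * (k + 1) \<le> m"
  shows "\<exists>v Z. unit_sum n v \<and> consistent n (\<lambda>_. id) v \<and> bij_betw Z {..<n} {..<n} \<and>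
    real m * welfare n v (run_out (A (\<lambda>_. id)) v) \<le> 2 * real (k + 1) * welfare n v Z"
proof -
  obtain T where T: "\<forall>i. T i \<le> k + 1"
    and fooled: "welfare n (profile T) (run_out (A (\<lambda>_. id)) (profile T)) = base_welfare"
    using exists_fooling_profile[OF assms(1)] by blast
  obtain Z where Z: "bij_betw Z {..<n} {..<n}" "1 - base_welfare \<le> welfare n (profile T) Z"
    using exists_matching_welfare_ge[OF T] by blast
  have m: "0 < real m" "2 * real (k + 1) \<le> real m"
    using m_ge_2 of_nat_mono[OF assms(2), where 'a=real] by simp_all
  have "real (k + 1) / real m \<le> 1 / 2" using m by (simp add: field_simps)
  hence half: "base_welfare \<le> 1 / 2" using base_welfare_le by linarith
  have "real m * base_welfare \<le> real (k + 1)"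
    using base_welfare_le m by (simp add: field_simps)
  also have "\<dots> = 2 * real (k + 1) * (1 / 2)" by simp
  also have "\<dots> \<le> 2 * real (k + 1) * (1 - base_welfare)"
    using half by (intro mult_left_mono) simp_all
  also have "\<dots> \<le> 2 * real (k + 1) * welfare n (profile T) Z"
    using Z(2) by (intro mult_left_mono) simp_all
  finally have "real m * base_welfare \<le> 2 * real (k + 1) * welfare n (profile T) Z" .
  thus ?thesis using fooled Z(1) T unit_sum_profile consistent_profile by metis
qed

end

section \<open>The distortion bound\<close>

lemma distortion_witness_trivial:
  assumes "valid_alg n k A" "c \<le> 1"
  shows "\<exists>v. unit_sum n v \<and> consistent n (\<lambda>_. id) v \<and>
    (\<exists>Z. bij_betw Z {..<n} {..<n} \<and> welfare n v Z \<ge> c * welfare n v (run_out (A (\<lambda>_. id)) v))"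
proof -
  define v where "v = (\<lambda>(i::nat) (j::nat). 1 / real n)"
  have v: "unit_sum n v" "consistent n (\<lambda>_. id) v"
    by (simp_all add: unit_sum_def consistent_def v_def)
  define Y where "Y = run_out (A (\<lambda>_. id)) v"
  have bij: "bij_betw Y {..<n} {..<n}"
    using valid_alg_run(1)[OF assms(1) _ v] by (simp add: is_ranking_def Y_def)
  have "c * welfare n v Y \<le> welfare n v Y"
    using mult_right_mono[OF assms(2) welfare_nonneg[OF v(1) bij]] by simp
  thus ?thesis using v bij Y_def by blast
qed

lemma distortion_witness_large:
  assumes valid: "valid_alg n k A" and k: "1 \<le> k"
    and x: "8 * real k < x" "x ^ (k + 1) = real n"
  shows "\<exists>v. unit_sum n v \<and> consistent n (\<lambda>_. id) v \<and>
    (\<exists>Z. bij_betw Z {..<n} {..<n} \<and>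
      welfare n v Z \<ge> 1/8 * (x / real k) * welfare n v (run_out (A (\<lambda>_. id)) v))"
proof -
  define m where "m = nat \<lfloor>x\<rfloor>"
  have m_le_x: "real m \<le> x" and x_le: "x \<le> 2 * real m" and m_ge: "8 * k \<le> m"
    using x k by (simp_all add: m_def le_nat_floor) linarith
  have "real m ^ (k + 1) \<le> real n" using m_le_x x by (metis power_mono of_nat_0_le_iff)
  hence "m ^ (k + 1) \<le> n" by (metis of_nat_le_iff of_nat_power)
  then interpret hard_instance m k n
    using m_ge k by unfold_locales simp_all
  obtain v Z where vZ: "unit_sum n v" "consistent n (\<lambda>_. id) v" "bij_betw Z {..<n} {..<n}"
    and ratio: "real m * welfare n v (run_out (A (\<lambda>_. id)) v) \<le> 2 * real (k + 1) * welfare n v Z"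
    using adversary_ratio[OF valid] m_ge k by auto
  have W: "0 \<le> welfare n v (run_out (A (\<lambda>_. id)) v)"
    using welfare_nonneg[OF vZ(1) valid_alg_run(1)[OF valid _ vZ(1,2)]] by (simp add: is_ranking_def)
  have "1/8 * (x / real k) * welfare n v (run_out (A (\<lambda>_. id)) v)
      \<le> 1/8 * (2 * real m / real k) * welfare n v (run_out (A (\<lambda>_. id)) v)"
    using x_le k W by (intro mult_right_mono mult_left_mono divide_right_mono) simp_all
  also have "\<dots> = real m * welfare n v (run_out (A (\<lambda>_. id)) v) / (4 * real k)" by simp
  also have "\<dots> \<le> 2 * real (k + 1) * welfare n v Z / (4 * real k)"
    using ratio by (rule divide_right_mono) simp
  also have "\<dots> \<le> 4 * real k * welfare n v Z / (4 * real k)"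
    using k welfare_nonneg[OF vZ(1,3)] by (intro divide_right_mono mult_right_mono) simp_all
  also have "\<dots> = welfare n v Z" using k by simp
  finally show ?thesis using vZ by blast
qed

theorem theorem6:
  fixes \<xi> :: real
  assumes "0 < \<xi>" and "\<xi> < 1"
  shows "\<exists>c > 0. \<forall>(n::nat) (k::nat) A.
           1 \<le> k \<and> real k \<le> (1 - \<xi>) * real n powr (1 / (real k + 1)) \<and> valid_alg n k A \<longrightarrow>
           (\<exists>\<sigma> v. is_ranking n \<sigma> \<and> (\<forall>r\<ge>n. \<sigma> r = r) \<and>
              unit_sum n v \<and> consistent n (\<lambda>_. \<sigma>) v \<and>
              (\<exists>Z. bij_betw Z {..<n} {..<n} \<and>
                 welfare n v Z \<ge> c * (real n powr (1 / (real k + 1)) / real k)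
                                   * welfare n v (run_out (A (\<lambda>_. \<sigma>)) v)))"
proof (intro exI[of _ "1/8"] conjI allI impI)
  fix n k :: nat and A
  assume "1 \<le> k \<and> real k \<le> (1 - \<xi>) * real n powr (1 / (real k + 1)) \<and> valid_alg n k A"
  hence k: "1 \<le> k" and valid: "valid_alg n k A" by auto
  define x where "x = root (k + 1) (real n)"
  have x_eq: "real n powr (1 / (real k + 1)) = x"
    unfolding x_def by (simp add: root_powr_inverse add.commute)
  have "\<exists>v. unit_sum n v \<and> consistent n (\<lambda>_. id) v \<and> (\<exists>Z. bij_betw Z {..<n} {..<n} \<and>
      welfare n v Z \<ge> 1/8 * (x / real k) * welfare n v (run_out (A (\<lambda>_. id)) v))"
  proof (cases "x \<le> 8 * real k")
    case True
    hence "1/8 * (x / real k) \<le> 1" using k by (simp add: field_simps)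
    thus ?thesis by (rule distortion_witness_trivial[OF valid])
  next
    case False
    moreover have "x ^ (k + 1) = real n" unfolding x_def by (rule real_root_pow_pos2) simp_all
    ultimately show ?thesis using distortion_witness_large[OF valid k] by simp
  qed
  thus "\<exists>\<sigma> v. is_ranking n \<sigma> \<and> (\<forall>r\<ge>n. \<sigma> r = r) \<and> unit_sum n v \<and> consistent n (\<lambda>_. \<sigma>) v \<and>
      (\<exists>Z. bij_betw Z {..<n} {..<n} \<and> welfare n v Z \<ge> 1/8 * (real n powr (1 / (real k + 1)) / real k)
                                   * welfare n v (run_out (A (\<lambda>_. \<sigma>)) v))"
    unfolding x_eq by (intro exI[of _ id]) (simp add: is_ranking_def)
qed simp

end
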